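(* Let $k\ge1$, $n\ge 2k+1$ and $x\in X_{n,k}$. Then $d(f(x))=d(x)$; hence the number of descents is the same for all strings on the cycle $C(x)=(x,f(x),f^2(x),\dots)$.
   Context: $X_{n,k}$ is the set of binary strings of length $n$ with exactly $k$ ones, positions taken cyclically modulo $n$. Cyclic parenthesis matching: regard $x$ as cyclic, $1$s as opening and $0$s as closing brackets; each $1$ at position $i$ is matched to the last $0$ of the shortest cyclic substring starting at $i$ going right that contains equally many $0$s and $1$s (every $1$ is matched; $n-2k$ zeros are unmatched). $f(x)$ is obtained from $x$ by complementing all matched bits. $d(x)$ is the number of cyclic descents of $x$, i.e. the number of positions $i\in[n]$ with $x_i=1$ and $x_{i+1}=0$ (indices mod $n$). *)

theory Defs
  imports Main
begin

text \<open>Binary strings are bool lists (True = 1, False = 0), indexed 0..n-1, read cyclically.\<close>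

definition Xnk :: "nat \<Rightarrow> nat \<Rightarrow> bool list set" where
  "Xnk n k = {x. length x = n \<and> count_list x True = k}"

definition cbit :: "bool list \<Rightarrow> nat \<Rightarrow> bool" where
  "cbit x i = x ! (i mod length x)"

definition ones_in :: "bool list \<Rightarrow> nat \<Rightarrow> nat \<Rightarrow> nat" where
  "ones_in x i L = card {t. t < L \<and> cbit x (i + t)}"

definition match_len :: "bool list \<Rightarrow> nat \<Rightarrow> nat" where
  "match_len x i = (LEAST L. 0 < L \<and> 2 * ones_in x i L = L)"

text \<open>position of the 0 matched to the 1 at position i\<close>
definition partner :: "bool list \<Rightarrow> nat \<Rightarrow> nat" where
  "partner x i = (i + match_len x i - 1) mod length x"

definition matched :: "bool list \<Rightarrow> nat \<Rightarrow> bool" where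
  "matched x j = (x ! j \<or> (\<exists>i < length x. x ! i \<and> partner x i = j))"

definition flip :: "bool list \<Rightarrow> bool list" where
  "flip x = map (\<lambda>j. if matched x j then \<not> x ! j else x ! j) [0..<length x]"

definition descents :: "bool list \<Rightarrow> nat" where
  "descents x = card {i. i < length x \<and> x ! i \<and> \<not> cbit x (i + 1)}"

end

theory Submission
  imports Defs
begin

text \<open>The 1s of \<open>f(x)\<close> are the matched 0s of \<open>x\<close>. Read cyclically, any binary word contains as
many factors 10 as factors 01, so \<open>d(f(x))\<close> counts the positions \<open>i\<close> that are not matched 0s
while \<open>i + 1\<close> is one. These are exactly the descents of \<open>x\<close>: the 1 of a factor 10 is matched to
the 0 right after it, and conversely a 0 directly in front of a matched 0 is itself matched.
Since \<open>f\<close> does not increase the number of 1s, the hypothesis \<open>2k \<le> n\<close> persists along the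
orbit of \<open>x\<close>.\<close>

lemma mod_Suc_cancel:
  assumes "0 < n" "(a + 1) mod n = (b + 1) mod (n::nat)"
  shows "a mod n = b mod n"
proof -
  have "a mod n = (a + 1 + (n - 1)) mod n" using assms(1) by simp
  also have "\<dots> = ((a + 1) mod n + (n - 1)) mod n" by (simp add: mod_add_left_eq)
  also have "\<dots> = ((b + 1) mod n + (n - 1)) mod n" using assms(2) by simp
  also have "\<dots> = (b + 1 + (n - 1)) mod n" by (simp add: mod_add_left_eq)
  also have "\<dots> = b mod n" using assms(1) by simp
  finally show ?thesis .
qed

lemma card_cyclic_shift:
  assumes "0 < (n::nat)"
  shows "card {j. j < n \<and> P ((j + 1) mod n)} = card {j. j < n \<and> P j}"
proof -
  let ?S = "{j. j < n \<and> P ((j + 1) mod n)}"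
  have "inj_on (\<lambda>j. (j + 1) mod n) ?S"
  proof (rule inj_onI)
    fix a b assume "a \<in> ?S" "b \<in> ?S" "(a + 1) mod n = (b + 1) mod n"
    then show "a = b" using mod_Suc_cancel[OF assms, of a b] by simp
  qed
  then have "card ((\<lambda>j. (j + 1) mod n) ` ?S) = card ?S" by (rule card_image)
  moreover have "(\<lambda>j. (j + 1) mod n) ` ?S = {j. j < n \<and> P j}"
  proof (intro equalityI subsetI)
    fix j assume j: "j \<in> {j. j < n \<and> P j}"
    have "((j + (n - 1)) mod n + 1) mod n = (j + (n - 1) + 1) mod n"
      by (rule mod_add_left_eq)
    also have "j + (n - 1) + 1 = j + n" using assms by simp
    finally have "((j + (n - 1)) mod n + 1) mod n = j" using j by simp
    then show "j \<in> (\<lambda>j. (j + 1) mod n) ` ?S"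
      using j assms by (intro image_eqI[of _ _ "(j + (n - 1)) mod n"]) simp_all
  qed (use assms in auto)
  ultimately show ?thesis by simp
qed

lemma card_cyclic_descents_eq_ascents:
  assumes "0 < (n::nat)"
  shows "card {j. j < n \<and> P j \<and> \<not> P ((j + 1) mod n)} =
         card {j. j < n \<and> \<not> P j \<and> P ((j + 1) mod n)}"
proof -
  let ?both = "{j. j < n \<and> P j \<and> P ((j + 1) mod n)}"
  have "{j. j < n \<and> P j} = {j. j < n \<and> P j \<and> \<not> P ((j + 1) mod n)} \<union> ?both"
    and "{j. j < n \<and> P ((j + 1) mod n)} = {j. j < n \<and> \<not> P j \<and> P ((j + 1) mod n)} \<union> ?both"
    by auto
  then have "card {j. j < n \<and> P j} = card {j. j < n \<and> P j \<and> \<not> P ((j + 1) mod n)} + card ?both"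
    and "card {j. j < n \<and> P ((j + 1) mod n)} =
         card {j. j < n \<and> \<not> P j \<and> P ((j + 1) mod n)} + card ?both"
    by (simp_all add: card_Un_disjoint disjoint_iff)
  then show ?thesis using card_cyclic_shift[OF assms, of P] by simp
qed

lemma ones_in_0 [simp]: "ones_in x i 0 = 0"
  unfolding ones_in_def by simp

lemma ones_in_Suc:
  "ones_in x i (Suc L) = ones_in x i L + (if cbit x (i + L) then 1 else 0)"
proof -
  have "{t. t < Suc L \<and> cbit x (i + t)} =
        {t. t < L \<and> cbit x (i + t)} \<union> (if cbit x (i + L) then {L} else {})"
    by (auto simp: less_Suc_eq)
  then show ?thesis unfolding ones_in_def by (simp add: card_insert_if)
qed

lemma ones_in_add: "ones_in x i (a + b) = ones_in x i a + ones_in x (i + a) b"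
  by (induction b) (simp_all add: ones_in_Suc add.assoc)

lemma ones_in_mod: "ones_in x (i mod length x) L = ones_in x i L"
  unfolding ones_in_def cbit_def by (simp add: mod_add_left_eq)

lemma ones_in_length:
  assumes "0 < length x"
  shows "ones_in x i (length x) = count_list x True"
proof -
  let ?n = "length x"
  have "{t. t < ?n \<and> cbit x (0 + t)} = {t. t < ?n \<and> x ! t}"
    unfolding cbit_def by auto
  then have start: "ones_in x 0 ?n = count_list x True"
    unfolding ones_in_def by (simp add: count_list_eq_length_filter length_filter_conv_card)
  have "ones_in x 0 i + ones_in x i ?n = ones_in x 0 ?n + ones_in x ?n i"
    using ones_in_add[of x 0 i ?n] ones_in_add[of x 0 ?n i] by (simp add: add.commute)
  moreover have "ones_in x ?n i = ones_in x 0 i"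
    using ones_in_mod[of x ?n i] by simp
  ultimately show ?thesis using start by simp
qed

lemma match_len_minimal: "0 < L \<Longrightarrow> L < match_len x i \<Longrightarrow> 2 * ones_in x i L \<noteq> L"
  unfolding match_len_def using not_less_Least by blast

lemma match_len_eqI:
  assumes "0 < L" "2 * ones_in x i L = L"
    and "\<And>L'. 0 < L' \<Longrightarrow> L' < L \<Longrightarrow> 2 * ones_in x i L' \<noteq> L'"
  shows "match_len x i = L"
  unfolding match_len_def
proof (rule Least_equality)
  fix L' assume "0 < L' \<and> 2 * ones_in x i L' = L'"
  then show "L \<le> L'" using assms(3)[of L'] leI by blast
qed (use assms in simp)

lemma match_len_balanced:
  assumes "0 < length x" "2 * count_list x True \<le> length x" "cbit x i"
  shows "0 < match_len x i" "2 * ones_in x i (match_len x i) = match_len x i"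
proof -
  \<comment> \<open>The excess \<open>2 * ones_in x i L - L\<close> is 1 at \<open>L = 1\<close>, at most 0 at \<open>L = length x\<close>, and changes
      by one in each step, so where it first drops to at most 0 it equals 0.\<close>
  let ?P = "\<lambda>L. 0 < L \<and> 2 * ones_in x i L \<le> L"
  define L where "L = (LEAST L. ?P L)"
  have "?P (length x)" using assms(1,2) ones_in_length by simp
  then have PL: "?P L" unfolding L_def by (rule LeastI)
  then have L2: "2 \<le> L" using assms(3) by (cases "L = 1") (auto simp: ones_in_Suc)
  have "\<not> ?P (L - 1)" unfolding L_def by (rule not_less_Least) (use L2 L_def in auto)
  moreover have "ones_in x i (L - 1) \<le> ones_in x i L"
    using ones_in_Suc[of x i "L - 1"] L2 by (simp add: Suc_diff_le[symmetric])
  ultimately have "0 < L \<and> 2 * ones_in x i L = L" using PL L2 by auto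
  then have "0 < match_len x i \<and> 2 * ones_in x i (match_len x i) = match_len x i"
    unfolding match_len_def by (rule LeastI)
  then show "0 < match_len x i" "2 * ones_in x i (match_len x i) = match_len x i" by auto
qed

text \<open>The 1 at offset \<open>t\<close> from \<open>i\<close> is matched where the excess counted from \<open>i\<close> first returns to
its value at \<open>t\<close>.\<close>

lemma match_len_next_return:
  assumes "2 * ones_in x i t = t + 1" "t < T" "2 * ones_in x i T = T + 1"
    and "\<And>s. t < s \<Longrightarrow> s < T \<Longrightarrow> 2 * ones_in x i s \<noteq> s + 1"
  shows "match_len x ((i + t) mod length x) = T - t"
proof -
  have shift: "2 * ones_in x ((i + t) mod length x) u = u \<longleftrightarrow> 2 * ones_in x i (t + u) = t + u + 1"
    for u using assms(1) by (simp add: ones_in_mod ones_in_add)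
  show ?thesis
  proof (rule match_len_eqI)
    show "2 * ones_in x ((i + t) mod length x) (T - t) = T - t"
      using shift[of "T - t"] assms(2,3) by simp
  next
    fix u assume "0 < u" "u < T - t"
    then show "2 * ones_in x ((i + t) mod length x) u \<noteq> u"
      using shift[of u] assms(4)[of "t + u"] by simp
  qed (use assms(2) in simp)
qed

lemma partner_descent:
  assumes "j < length x" "x ! j" "\<not> x ! ((j + 1) mod length x)"
  shows "partner x j = (j + 1) mod length x"
proof -
  have "ones_in x j 1 = 1" "ones_in x j 2 = 1"
    using assms by (simp_all add: ones_in_Suc cbit_def numeral_2_eq_2)
  then have "match_len x j = 2"
    by (intro match_len_eqI) (auto simp: less_2_cases_iff)
  then show ?thesis unfolding partner_def by simp
qed

definition matched_zero :: "bool list \<Rightarrow> nat \<Rightarrow> bool" where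
  "matched_zero x j \<longleftrightarrow> \<not> x ! j \<and> (\<exists>i < length x. x ! i \<and> partner x i = j)"

lemma flip_length [simp]: "length (flip x) = length x"
  unfolding flip_def by simp

lemma nth_flip: "j < length x \<Longrightarrow> flip x ! j = matched_zero x j"
  unfolding flip_def matched_zero_def matched_def by auto

lemma count_flip_le: "count_list (flip x) True \<le> count_list x True"
proof -
  have "count_list (flip x) True = card {j. j < length x \<and> matched_zero x j}"
    by (simp add: count_list_eq_length_filter length_filter_conv_card nth_flip cong: conj_cong)
  also have "\<dots> \<le> card (partner x ` {i. i < length x \<and> x ! i})"
    by (rule card_mono) (auto simp: matched_zero_def)
  also have "\<dots> \<le> card {i. i < length x \<and> x ! i}"
    by (rule card_image_le) simp
  also have "\<dots> = count_list x True"
    by (simp add: count_list_eq_length_filter length_filter_conv_card)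
  finally show ?thesis .
qed

text \<open>The witness \<open>t\<close> is the last prefix length before the penultimate 0 at which the excess is one.\<close>

lemma penultimate_zero_matched:
  assumes "0 < length x" "2 * count_list x True \<le> length x" "cbit x i"
    and zeros: "\<not> cbit x (i + (match_len x i - 2))" "\<not> cbit x (i + (match_len x i - 1))"
  shows "\<exists>t < match_len x i - 2. cbit x (i + t) \<and>
           match_len x ((i + t) mod length x) = match_len x i - 1 - t"
proof -
  define L where "L = match_len x i"
  have one: "ones_in x i 1 = 1" using assms(3) ones_in_Suc[of x i 0] by simp
  have L: "0 < L" "2 * ones_in x i L = L"
    using match_len_balanced[OF assms(1-3)] unfolding L_def by auto
  have L2: "2 \<le> L" using L one by (cases "L = 1") auto
  have "Suc (L - 2) = L - 1" "Suc (L - 1) = L" using L2 by auto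
  then have "ones_in x i (L - 1) = ones_in x i (L - 2)" "ones_in x i L = ones_in x i (L - 1)"
    using zeros ones_in_Suc[of x i "L - 2"] ones_in_Suc[of x i "L - 1"] unfolding L_def by simp_all
  then have exc1: "2 * ones_in x i (L - 1) = L" and exc2: "2 * ones_in x i (L - 2) = L"
    using L(2) by simp_all
  have "L \<noteq> 2" "L \<noteq> 3" using exc2 one by auto
  then have L4: "4 \<le> L" using L2 by simp
  define A where "A = {s. s < L - 2 \<and> 2 * ones_in x i s = s + 1}"
  have "1 \<in> A" unfolding A_def using one L4 by simp
  define t where "t = Max A"
  have "finite A" unfolding A_def by simp
  then have "t \<in> A" and t_max: "\<And>s. s \<in> A \<Longrightarrow> s \<le> t"
    unfolding t_def using \<open>1 \<in> A\<close> by (auto intro: Max_in)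
  then have t: "t < L - 2" "2 * ones_in x i t = t + 1" unfolding A_def by auto
  have "cbit x (i + t)"
  proof (rule ccontr)
    assume "\<not> cbit x (i + t)"
    then have "2 * ones_in x i (Suc t) = Suc t" using ones_in_Suc[of x i t] t by simp
    then show False using match_len_minimal[of "Suc t" x i] t(1) unfolding L_def by simp
  qed
  moreover have "match_len x ((i + t) mod length x) = L - 1 - t"
  proof (rule match_len_next_return)
    fix s assume s: "t < s" "s < L - 1"
    show "2 * ones_in x i s \<noteq> s + 1"
    proof (cases "s = L - 2")
      case True
      then show ?thesis using exc2 L4 by simp
    next
      case False
      then have "s < L - 2" using s(2) by arith
      moreover have "s \<notin> A" using t_max s(1) by force
      ultimately show ?thesis unfolding A_def by simp
    qed
  qed (use t exc1 L4 in auto)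
  ultimately show ?thesis using t(1) unfolding L_def by blast
qed

lemma matched_zero_before_matched_zero:
  assumes n: "0 < length x" "2 * count_list x True \<le> length x"
    and j: "j < length x" "\<not> x ! j" and mz: "matched_zero x ((j + 1) mod length x)"
  shows "matched_zero x j"
proof -
  let ?n = "length x"
  obtain i where i: "i < ?n" "x ! i" "partner x i = (j + 1) mod ?n"
    and zero: "\<not> x ! ((j + 1) mod ?n)"
    using mz unfolding matched_zero_def by auto
  define L where "L = match_len x i"
  have ci: "cbit x i" using i unfolding cbit_def by simp
  have L2: "2 \<le> L"
    using match_len_balanced[OF n ci] ci ones_in_Suc[of x i 0] unfolding L_def
    by (cases "match_len x i = 1") auto
  have "(i + L - 1) mod ?n = (j + 1) mod ?n" using i(3) unfolding partner_def L_def .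
  moreover have "i + L - 1 = i + (L - 2) + 1" using L2 by simp
  ultimately have end_pos: "(i + (L - 2) + 1) mod ?n = (j + 1) mod ?n" by simp
  then have j_pos: "(i + (L - 2)) mod ?n = j"
    using mod_Suc_cancel[OF n(1) end_pos] j(1) by simp
  have "i + (L - 1) = i + (L - 2) + 1" using L2 by simp
  then have "\<not> cbit x (i + (L - 2))" "\<not> cbit x (i + (L - 1))"
    using j_pos end_pos j(2) zero unfolding cbit_def by simp_all
  then obtain t where t: "t < L - 2" "cbit x (i + t)" "match_len x ((i + t) mod ?n) = L - 1 - t"
    using penultimate_zero_matched[OF n ci] unfolding L_def by blast
  then have "partner x ((i + t) mod ?n) = ((i + t) mod ?n + (L - 2 - t)) mod ?n"
    unfolding partner_def by (simp add: Suc_diff_Suc)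
  also have "\<dots> = (i + t + (L - 2 - t)) mod ?n" by (rule mod_add_left_eq)
  also have "i + t + (L - 2 - t) = i + (L - 2)" using t(1) by simp
  also have "(i + (L - 2)) mod ?n = j" by (rule j_pos)
  finally have "partner x ((i + t) mod ?n) = j" .
  moreover have "(i + t) mod ?n < ?n" "x ! ((i + t) mod ?n)"
    using t(2) n(1) unfolding cbit_def by simp_all
  ultimately show ?thesis using j(2) unfolding matched_zero_def by blast
qed

lemma matched_zero_ascent_iff_descent:
  assumes "0 < length x" "2 * count_list x True \<le> length x" "j < length x"
  shows "\<not> matched_zero x j \<and> matched_zero x ((j + 1) mod length x)
     \<longleftrightarrow> x ! j \<and> \<not> x ! ((j + 1) mod length x)"
proof
  assume "\<not> matched_zero x j \<and> matched_zero x ((j + 1) mod length x)"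
  then show "x ! j \<and> \<not> x ! ((j + 1) mod length x)"
    using matched_zero_before_matched_zero[OF assms] unfolding matched_zero_def by blast
next
  assume "x ! j \<and> \<not> x ! ((j + 1) mod length x)"
  then show "\<not> matched_zero x j \<and> matched_zero x ((j + 1) mod length x)"
    using partner_descent[of j x] assms unfolding matched_zero_def by auto
qed

lemma descents_flip:
  assumes "0 < length x" "2 * count_list x True \<le> length x"
  shows "descents (flip x) = descents x"
proof -
  let ?n = "length x"
  have "descents (flip x) = card {j. j < ?n \<and> matched_zero x j \<and> \<not> matched_zero x ((j + 1) mod ?n)}"
    unfolding descents_def cbit_def using assms(1) by (simp add: nth_flip cong: conj_cong)
  also have "\<dots> = card {j. j < ?n \<and> \<not> matched_zero x j \<and> matched_zero x ((j + 1) mod ?n)}"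
    by (rule card_cyclic_descents_eq_ascents) (rule assms(1))
  also have "\<dots> = card {j. j < ?n \<and> x ! j \<and> \<not> x ! ((j + 1) mod ?n)}"
    using matched_zero_ascent_iff_descent[OF assms] by (intro arg_cong[where f = card] Collect_cong) blast
  also have "\<dots> = descents x" unfolding descents_def cbit_def by simp
  finally show ?thesis .
qed

lemma descents_funpow_flip:
  assumes "0 < length x" "2 * count_list x True \<le> length x"
  shows "descents ((flip ^^ m) x) = descents x"
  using assms
proof (induction m arbitrary: x)
  case (Suc m)
  have "descents ((flip ^^ m) (flip x)) = descents (flip x)"
    using Suc.IH[of "flip x"] Suc.prems count_flip_le[of x] by simp
  then show ?case using descents_flip[OF Suc.prems] by (simp add: funpow_swap1)
qed simp

theorem mainTheorem7:
  fixes n k :: nat and x :: "bool list"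
  assumes "k \<ge> 1" and "n \<ge> 2 * k + 1" and "x \<in> Xnk n k"
  shows "descents (flip x) = descents x \<and> (\<forall>m. descents ((flip ^^ m) x) = descents x)"
proof -
  have "0 < length x" "2 * count_list x True \<le> length x"
    using assms(2,3) unfolding Xnk_def by auto
  then show ?thesis using descents_flip descents_funpow_flip by blast
qed

end
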